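(* Let $(X_i,\mathbf{x}_m,X_f)$ be an instance of the three-point Dubins path problem, and consider the class of $C_1S_2C_3S_4C_5$ paths with a fixed turning direction ($L$ or $R$) for each curved segment. If there exists a $C_1S_2C_3S_4C_5$ path in this class in which $S_2$ and $S_4$ are parallel and intersecting (i.e., lie on a common line), then this path is the shortest path in the class.
   Context: A Dubins vehicle moves forward in the plane with unit speed and minimum turning radius $R_{\min}$: $\dot x=\cos\alpha$, $\dot y=\sin\alpha$, $\dot\alpha=u$, $|u|\le 1/R_{\min}$. A configuration is $X=(\mathbf{x},\alpha)$. The three-point Dubins path problem: given configurations $X_i$, $X_f$ and a midpoint $\mathbf{x}_m$ (pairwise distances among the three points at least $4R_{\min}$), find a heading at $\mathbf{x}_m$ minimizing the length of the Dubins path from $X_i$ through $\mathbf{x}_m$ to $X_f$. A path of type $C_1S_2C_3S_4C_5$ from $X_i$ via $\mathbf{x}_m$ to $X_f$ consists of minimum-radius arcs $C_1$ (starting at $X_i$), $C_3$ (passing through $\mathbf{x}_m$), $C_5$ (ending at $X_f$), each a left ($L$) or right ($R$) turn, connected by straight segments $S_2$ and $S_4$; the heading at $\mathbf{x}_m$ is free. *)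

theory Defs
  imports "HOL-Analysis.Analysis"
begin

text \<open>Planar points are pairs of reals; a configuration is a point with a heading angle.\<close>

type_synonym point = "real \<times> real"
type_synonym config = "point \<times> real"

datatype turn = Lt | Rt

fun tsign :: "turn \<Rightarrow> real" where
  "tsign Lt = 1"
| "tsign Rt = -1"

text \<open>Configuration reached after following a minimum-radius arc of radius r,
  turning direction d, arc length l (Dubins kinematics with unit speed).\<close>
definition arc :: "real \<Rightarrow> turn \<Rightarrow> real \<Rightarrow> config \<Rightarrow> config" where
  "arc r d l X = (let x = fst (fst X); y = snd (fst X); a = snd X; s = tsign d;
                     a' = a + s * l / r
                  in ((x + s * r * (sin a' - sin a), y - s * r * (cos a' - cos a)), a'))"

definition straight :: "real \<Rightarrow> config \<Rightarrow> config" where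
  "straight l X = ((fst (fst X) + l * cos (snd X), snd (fst X) + l * sin (snd X)), snd X)"

definition conf_eq :: "config \<Rightarrow> config \<Rightarrow> bool" where
  "conf_eq X Y \<longleftrightarrow> fst X = fst Y \<and> (\<exists>k::int. snd X = snd Y + 2 * pi * of_int k)"

definition dubins3_instance :: "real \<Rightarrow> config \<Rightarrow> point \<Rightarrow> config \<Rightarrow> bool" where
  "dubins3_instance r Xi xm Xf \<longleftrightarrow> r > 0 \<and>
     dist (fst Xi) xm \<ge> 4 * r \<and> dist xm (fst Xf) \<ge> 4 * r \<and> dist (fst Xi) (fst Xf) \<ge> 4 * r"

text \<open>A C1 S2 C3 S4 C5 path with turning directions d1 d3 d5 from Xi via xm to Xf,
  described by its segment lengths: l1 (arc C1), s2 (segment S2), l3a and l3b (the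
  parts of arc C3 before and after xm), s4 (segment S4), l5 (arc C5).\<close>
definition CSCSC_path ::
  "real \<Rightarrow> turn \<Rightarrow> turn \<Rightarrow> turn \<Rightarrow> config \<Rightarrow> point \<Rightarrow> config \<Rightarrow>
   real \<Rightarrow> real \<Rightarrow> real \<Rightarrow> real \<Rightarrow> real \<Rightarrow> real \<Rightarrow> bool" where
  "CSCSC_path r d1 d3 d5 Xi xm Xf l1 s2 l3a l3b s4 l5 \<longleftrightarrow>
     0 \<le> l1 \<and> l1 < 2 * pi * r \<and> 0 \<le> s2 \<and> 0 \<le> l3a \<and> 0 \<le> l3b \<and> l3a + l3b < 2 * pi * r \<and>
     0 \<le> s4 \<and> 0 \<le> l5 \<and> l5 < 2 * pi * r \<and>
     (let P1 = arc r d1 l1 Xi; P2 = straight s2 P1; Pm = arc r d3 l3a P2;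
          P3 = arc r d3 l3b Pm; P4 = straight s4 P3; P5 = arc r d5 l5 P4
      in fst Pm = xm \<and> conf_eq P5 Xf)"

definition CSCSC_length :: "real \<Rightarrow> real \<Rightarrow> real \<Rightarrow> real \<Rightarrow> real \<Rightarrow> real \<Rightarrow> real" where
  "CSCSC_length l1 s2 l3a l3b s4 l5 = l1 + s2 + l3a + l3b + s4 + l5"

text \<open>S2 (starting at configuration P1 = end of C1) and S4 (starting at P3 = end of C3)
  are parallel and lie on a common line: their directions are parallel and the start
  of S4 lies on the line carrying S2.\<close>
definition S2_S4_collinear ::
  "real \<Rightarrow> turn \<Rightarrow> turn \<Rightarrow> config \<Rightarrow> real \<Rightarrow> real \<Rightarrow> real \<Rightarrow> real \<Rightarrow> bool" where
  "S2_S4_collinear r d1 d3 Xi l1 s2 l3a l3b \<longleftrightarrow>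
     (let P1 = arc r d1 l1 Xi; P3 = arc r d3 l3b (arc r d3 l3a (straight s2 P1));
          a2 = snd P1; a4 = snd P3
      in sin (a4 - a2) = 0 \<and>
         (fst (fst P3) - fst (fst P1)) * sin a2 - (snd (fst P3) - snd (fst P1)) * cos a2 = 0)"

end

theory Submission
  imports Defs
begin

text \<open>Collinearity of S2 and S4 forces the middle arc C3 to be trivial: an arc of angle pi would
  put S4 on a parallel line at distance 2 R, and any other angle in (0, 2 pi) makes S2 and S4
  non-parallel. The path is then C1 S C5 with x_m on its straight part, and it is the only path of
  its class. Compare it with another path of the class that turns through \<alpha> on C3 before x_m and
  through \<beta> after it, and let \<zeta> be the turn between the two headings at x_m. The pairwise
  distances of at least 4 R make both straight parts of the given path longer than 2 R. Both paths
  leave the same circle C1 and pass through x_m, which forces sin (\<alpha> - \<zeta>) \<ge> 0 and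
  sin \<alpha> < 0 whenever sin \<zeta> < 0; symmetrically, reaching the same circle C5 forces
  sin (\<beta> + \<zeta>) \<ge> 0 and sin \<beta> < 0 whenever sin \<zeta> > 0. Since \<alpha> + \<beta> < 2 pi, this leaves
  only \<zeta> = 0 modulo 2 pi, and then \<alpha> = \<beta> = 0 and all segment lengths agree.\<close>

lemma tsign_cases: "tsign d = 1 \<or> tsign d = -1"
  by (cases d) auto

lemma fst_fst_arc:
  "fst (fst (arc r d l X)) = fst (fst X) + tsign d * r * (sin (snd X + tsign d * l / r) - sin (snd X))"
  and snd_fst_arc:
  "snd (fst (arc r d l X)) = snd (fst X) - tsign d * r * (cos (snd X + tsign d * l / r) - cos (snd X))"
  and snd_arc: "snd (arc r d l X) = snd X + tsign d * l / r"
  by (simp_all add: arc_def Let_def)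

lemma fst_fst_straight: "fst (fst (straight l X)) = fst (fst X) + l * cos (snd X)"
  and snd_fst_straight: "snd (fst (straight l X)) = snd (fst X) + l * sin (snd X)"
  and snd_straight: "snd (straight l X) = snd X"
  by (simp_all add: straight_def)

lemmas arc_straight_simps =
  fst_fst_arc snd_fst_arc snd_arc fst_fst_straight snd_fst_straight snd_straight

lemma CSCSC_path_lengths:
  assumes "CSCSC_path r d1 d3 d5 Xi xm Xf l1 s2 l3a l3b s4 l5"
  shows "0 \<le> l1" "l1 < 2 * pi * r" "0 \<le> s2" "0 \<le> l3a" "0 \<le> l3b" "l3a + l3b < 2 * pi * r"
    "0 \<le> s4" "0 \<le> l5" "l5 < 2 * pi * r"
  using assms unfolding CSCSC_path_def by blast+

lemma CSCSC_path_equations: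
  assumes "CSCSC_path r d1 d3 d5 Xi xm Xf l1 s2 l3a l3b s4 l5"
  defines "\<phi>2 \<equiv> snd Xi + tsign d1 * l1 / r"
    and "h \<equiv> snd Xi + tsign d1 * l1 / r + tsign d3 * l3a / r"
    and "\<phi>4 \<equiv> snd Xi + tsign d1 * l1 / r + tsign d3 * l3a / r + tsign d3 * l3b / r"
  shows "fst xm = fst (fst Xi) + tsign d1 * r * (sin \<phi>2 - sin (snd Xi)) + s2 * cos \<phi>2
                  + tsign d3 * r * (sin h - sin \<phi>2)"
    and "snd xm = snd (fst Xi) - tsign d1 * r * (cos \<phi>2 - cos (snd Xi)) + s2 * sin \<phi>2
                  - tsign d3 * r * (cos h - cos \<phi>2)"
    and "fst (fst Xf) = fst xm + tsign d3 * r * (sin \<phi>4 - sin h) + s4 * cos \<phi>4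
                  + tsign d5 * r * (sin (snd Xf) - sin \<phi>4)"
    and "snd (fst Xf) = snd xm - tsign d3 * r * (cos \<phi>4 - cos h) + s4 * sin \<phi>4
                  - tsign d5 * r * (cos (snd Xf) - cos \<phi>4)"
    and "\<exists>k::int. \<phi>4 + tsign d5 * l5 / r = snd Xf + 2 * pi * k"
proof -
  let ?P1 = "arc r d1 l1 Xi" let ?P2 = "straight s2 ?P1" let ?Pm = "arc r d3 l3a ?P2"
  let ?P3 = "arc r d3 l3b ?Pm" let ?P4 = "straight s4 ?P3" let ?P5 = "arc r d5 l5 ?P4"
  have xm: "fst ?Pm = xm" and "conf_eq ?P5 Xf"
    using assms(1) unfolding CSCSC_path_def Let_def by auto
  then obtain k :: int where k: "snd ?P5 = snd Xf + 2 * pi * k" and pos: "fst ?P5 = fst Xf"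
    unfolding conf_eq_def by auto
  have heading_P4: "snd ?P4 = \<phi>4"
    unfolding \<phi>4_def by (simp add: arc_straight_simps)
  have heading_P5: "snd ?P5 = \<phi>4 + tsign d5 * l5 / r"
    using heading_P4 by (simp add: arc_straight_simps)
  have sin_cos_P5: "sin (snd ?P5) = sin (snd Xf)" "cos (snd ?P5) = cos (snd Xf)"
    using k sin_cos_eq_iff by metis+
  show "fst xm = fst (fst Xi) + tsign d1 * r * (sin \<phi>2 - sin (snd Xi)) + s2 * cos \<phi>2
                  + tsign d3 * r * (sin h - sin \<phi>2)"
    using arg_cong[OF xm, of fst] by (simp add: arc_straight_simps \<phi>2_def h_def)
  show "snd xm = snd (fst Xi) - tsign d1 * r * (cos \<phi>2 - cos (snd Xi)) + s2 * sin \<phi>2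
                  - tsign d3 * r * (cos h - cos \<phi>2)"
    using arg_cong[OF xm, of snd] by (simp add: arc_straight_simps \<phi>2_def h_def)
  show "fst (fst Xf) = fst xm + tsign d3 * r * (sin \<phi>4 - sin h) + s4 * cos \<phi>4
                  + tsign d5 * r * (sin (snd Xf) - sin \<phi>4)"
    using arg_cong[OF pos, of fst] xm sin_cos_P5 heading_P5
    by (auto simp: arc_straight_simps \<phi>4_def h_def algebra_simps)
  show "snd (fst Xf) = snd xm - tsign d3 * r * (cos \<phi>4 - cos h) + s4 * sin \<phi>4
                  - tsign d5 * r * (cos (snd Xf) - cos \<phi>4)"
    using arg_cong[OF pos, of snd] xm sin_cos_P5 heading_P5
    by (auto simp: arc_straight_simps \<phi>4_def h_def algebra_simps)
  show "\<exists>k::int. \<phi>4 + tsign d5 * l5 / r = snd Xf + 2 * pi * k"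
    using k heading_P5 by auto
qed

lemma S2_S4_collinear_imp_C3_trivial:
  assumes r: "r > 0" and l3: "0 \<le> l3a" "0 \<le> l3b" "l3a + l3b < 2 * pi * r"
    and collinear: "S2_S4_collinear r d1 d3 Xi l1 s2 l3a l3b"
  shows "l3a = 0 \<and> l3b = 0"
proof -
  let ?P1 = "arc r d1 l1 Xi" let ?P3 = "arc r d3 l3b (arc r d3 l3a (straight s2 ?P1))"
  define a where "a = snd ?P1"
  define \<psi> where "\<psi> = (l3a + l3b) / r"
  define s where "s = tsign d3"
  have s: "s = 1 \<or> s = -1" unfolding s_def by (rule tsign_cases)
  have heading_P3: "snd ?P3 = a + s * \<psi>"
    unfolding a_def s_def \<psi>_def by (simp add: arc_straight_simps add_divide_distrib algebra_simps)
  have dx: "fst (fst ?P3) - fst (fst ?P1) = s2 * cos a + s * r * (sin (a + s * \<psi>) - sin a)"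
    using heading_P3 unfolding a_def s_def by (simp add: arc_straight_simps algebra_simps)
  have dy: "snd (fst ?P3) - snd (fst ?P1) = s2 * sin a - s * r * (cos (a + s * \<psi>) - cos a)"
    using heading_P3 unfolding a_def s_def by (simp add: arc_straight_simps algebra_simps)
  have parallel: "sin (snd ?P3 - a) = 0"
    and on_line: "(fst (fst ?P3) - fst (fst ?P1)) * sin a - (snd (fst ?P3) - snd (fst ?P1)) * cos a = 0"
    using collinear unfolding S2_S4_collinear_def Let_def a_def by auto
  have "sin \<psi> = 0" using parallel heading_P3 s by auto
  then obtain i :: int where i: "\<psi> = i * pi" using sin_zero_iff_int2 by blast
  have "0 \<le> \<psi>" "\<psi> < 2 * pi" unfolding \<psi>_def using l3 r by (auto simp: divide_simps mult.commute)
  hence "0 \<le> real_of_int i" "real_of_int i < 2" using i pi_gt_zero by (auto simp: zero_le_mult_iff)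
  hence "i = 0 \<or> i = 1" by linarith
  moreover have "i \<noteq> 1"
  proof
    \<comment> \<open>a half turn on C3 puts S4 on the parallel line at distance 2 r\<close>
    assume "i = 1"
    hence "\<psi> = pi" using i by simp
    have "sin (a + s * pi) = - sin a" "cos (a + s * pi) = - cos a" using s by auto
    hence "0 = -2 * s * r * ((sin a)\<^sup>2 + (cos a)\<^sup>2)"
      using on_line unfolding dx dy \<open>\<psi> = pi\<close> by algebra
    then show False using s r by auto
  qed
  ultimately have "l3a + l3b = 0" using i r unfolding \<psi>_def by simp
  then show ?thesis using l3 by simp
qed

text \<open>The arc from heading a to heading b moves by at most 2 r, and by at most r along the
  direction b of the segment, so the squared distance from p to q is at most
  s^2 + 4 r^2 + 2 r s, which is less than (4 r)^2 if s \<le> 2 r.\<close>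

lemma arc_straight_length_gt:
  fixes p q :: "real \<times> real"
  assumes r: "r > 0" and s: "s \<ge> 0" and "c = 1 \<or> c = -1" and far: "dist p q \<ge> 4 * r"
    and qx: "fst q = fst p + c * r * (sin b - sin a) + s * cos b"
    and qy: "snd q = snd p - c * r * (cos b - cos a) + s * sin b"
  shows "s > 2 * r"
proof (rule ccontr)
  assume "\<not> s > 2 * r"
  hence s_le: "s \<le> 2 * r" by simp
  have "(dist p q)\<^sup>2 = (fst p - fst q)\<^sup>2 + (snd p - snd q)\<^sup>2"
    by (simp add: dist_Pair_Pair[of "fst p" "snd p" "fst q" "snd q", simplified] dist_real_def)
  also have "\<dots> = s\<^sup>2 + 2 * r\<^sup>2 * (1 - cos (b - a)) + 2 * r * s * (c * sin (b - a))"
  proof -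
    have "c\<^sup>2 = 1" using \<open>c = 1 \<or> c = -1\<close> by auto
    then show ?thesis
      unfolding qx qy sin_diff cos_diff using sin_cos_squared_add[of a] sin_cos_squared_add[of b]
      by algebra
  qed
  also have "\<dots> \<le> (2 * r)\<^sup>2 + 2 * r\<^sup>2 * 2 + 2 * r * (2 * r) * 1"
  proof -
    have "c * sin (b - a) \<le> 1" using \<open>c = 1 \<or> c = -1\<close> sin_le_one[of "b - a"] by auto
    hence "s * (c * sin (b - a)) \<le> 2 * r" using s s_le mult_left_le[of _ s] by fastforce
    hence "2 * r * s * (c * sin (b - a)) \<le> 2 * r * (2 * r) * 1"
      using r by (simp add: ac_simps)
    moreover have "s\<^sup>2 \<le> (2 * r)\<^sup>2" using s s_le by (intro power_mono)
    moreover have "2 * r\<^sup>2 * (1 - cos (b - a)) \<le> 2 * r\<^sup>2 * 2"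
      using cos_ge_minus_one[of "b - a"] by (intro mult_left_mono) auto
    ultimately show ?thesis by linarith
  qed
  also have "\<dots> < (4 * r)\<^sup>2" using r by (simp add: power2_eq_square)
  finally have "(dist p q)\<^sup>2 < (4 * r)\<^sup>2" .
  hence "dist p q < 4 * r" by (rule power2_less_imp_less) (use r in simp)
  then show False using far by simp
qed

lemma CSC_turn_constraints_same_turn:
  fixes r w t \<alpha> \<zeta> :: real
  assumes r: "r > 0" and w: "w > 2 * r" and t: "t \<ge> 0"
    and e1: "t * sin \<alpha> = w * sin \<zeta> - r + r * cos \<zeta>"
    and e2: "t * cos \<alpha> = w * cos \<zeta> - r * sin \<zeta>"
  shows "sin (\<alpha> - \<zeta>) \<ge> 0" and "cos \<zeta> = -1 \<Longrightarrow> sin (\<alpha> - \<zeta>) > 0"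
    and "sin \<zeta> < 0 \<Longrightarrow> sin \<alpha> < 0" and "cos \<zeta> = 1 \<Longrightarrow> sin \<alpha> = 0 \<and> cos \<alpha> = 1 \<and> t = w"
proof -
  have unit: "(sin \<alpha>)\<^sup>2 + (cos \<alpha>)\<^sup>2 = 1" "(sin \<zeta>)\<^sup>2 + (cos \<zeta>)\<^sup>2 = 1" by simp_all
  have "t\<^sup>2 = w\<^sup>2 - 2 * r * w * sin \<zeta> + 2 * r\<^sup>2 * (1 - cos \<zeta>)"
    using e1 e2 unit by algebra
  moreover have "w\<^sup>2 - 2 * r * w * sin \<zeta> \<ge> w * (w - 2 * r)"
    using sin_le_one[of \<zeta>] r w by (simp add: power2_eq_square algebra_simps mult_left_le)
  moreover have "w * (w - 2 * r) > 0" using r w by simp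
  moreover have "2 * r\<^sup>2 * (1 - cos \<zeta>) \<ge> 0" by simp
  ultimately have "t\<^sup>2 > 0" by linarith
  hence t_pos: "t > 0" using t by (cases "t = 0") auto
  have key: "t * sin (\<alpha> - \<zeta>) = r * (1 - cos \<zeta>)"
    unfolding sin_diff using e1 e2 unit by algebra
  have "t * sin (\<alpha> - \<zeta>) \<ge> 0" using key r cos_le_one[of \<zeta>] by simp
  then show "sin (\<alpha> - \<zeta>) \<ge> 0" using t_pos by (simp add: zero_le_mult_iff)
  show "sin (\<alpha> - \<zeta>) > 0" if "cos \<zeta> = -1"
  proof -
    have "t * sin (\<alpha> - \<zeta>) > 0" using key r that by simp
    then show ?thesis using t_pos by (simp add: zero_less_mult_iff)
  qed
  show "sin \<alpha> < 0" if "sin \<zeta> < 0"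
  proof -
    have "w * sin \<zeta> < 0" using that w r by (simp add: mult_pos_neg)
    moreover have "r * cos \<zeta> \<le> r" using r cos_le_one[of \<zeta>] by (simp add: mult_left_le)
    ultimately have "t * sin \<alpha> < 0" using e1 by linarith
    then show ?thesis using t_pos by (simp add: mult_less_0_iff)
  qed
  show "sin \<alpha> = 0 \<and> cos \<alpha> = 1 \<and> t = w" if "cos \<zeta> = 1"
  proof -
    have "sin \<zeta> = 0" using that unit(2) by simp
    hence "sin \<alpha> = 0" and tc: "t * cos \<alpha> = w" using e1 e2 that t_pos by simp_all
    hence "cos \<alpha> = 1 \<or> cos \<alpha> = -1" using unit(1) by (simp add: power2_eq_1_iff)
    hence "cos \<alpha> = 1" using tc t_pos w r by (auto simp: mult_pos_neg)
    then show ?thesis using \<open>sin \<alpha> = 0\<close> tc by simp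
  qed
qed

lemma tangent_length_combination_neg:
  fixes t X Y \<rho> :: real
  assumes \<rho>: "\<rho> > 0" and t: "t > 0" and X: "X < 0"
    and tangent: "t\<^sup>2 = X\<^sup>2 + Y\<^sup>2 - \<rho>\<^sup>2" and far: "Y > 0 \<Longrightarrow> X < - \<rho>"
  shows "t * X + \<rho> * Y < 0"
proof (cases "Y > 0")
  case True
  have "\<rho>\<^sup>2 < (- X)\<^sup>2" using far[OF True] \<rho> by (intro power_strict_mono) auto
  hence "(\<rho> * Y)\<^sup>2 < (t * - X)\<^sup>2"
  proof -
    have "(t * - X)\<^sup>2 - (\<rho> * Y)\<^sup>2 = ((- X)\<^sup>2 - \<rho>\<^sup>2) * (X\<^sup>2 + Y\<^sup>2)" using tangent by algebra
    moreover have "((- X)\<^sup>2 - \<rho>\<^sup>2) * (X\<^sup>2 + Y\<^sup>2) > 0"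
      using \<open>\<rho>\<^sup>2 < (- X)\<^sup>2\<close> X by (intro mult_pos_pos) (simp_all add: add_pos_nonneg)
    ultimately show ?thesis by linarith
  qed
  hence "\<rho> * Y < t * - X" by (rule power2_less_imp_less) (use t X in \<open>simp add: mult_pos_neg less_imp_le\<close>)
  then show ?thesis by simp
next
  case False
  have "t * X < 0" using t X by (simp add: mult_pos_neg)
  moreover have "\<rho> * Y \<le> 0" using False \<rho> by (simp add: mult_nonneg_nonpos)
  ultimately show ?thesis by linarith
qed

lemma opposite_turn_sin_numerator_neg:
  fixes r w t \<zeta> :: real
  assumes r: "r > 0" and w: "w > 2 * r" and t: "t \<ge> 0"
    and sz: "sin \<zeta> < 0" and tt: "t\<^sup>2 = w\<^sup>2 - 2 * w * r * sin \<zeta> - 2 * r\<^sup>2 * (1 - cos \<zeta>)"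
  shows "t * (w * sin \<zeta> - r - r * cos \<zeta>) + 2 * r * (w * cos \<zeta> + r * sin \<zeta>) < 0"
proof (rule tangent_length_combination_neg)
  have bounds: "-1 \<le> cos \<zeta>" "cos \<zeta> \<le> 1"
    by (simp_all add: cos_ge_minus_one cos_le_one)
  have "w * sin \<zeta> < 0" using sz w r by (simp add: mult_pos_neg)
  moreover have "- r \<le> r * cos \<zeta>" using mult_left_mono[OF bounds(1), of r] r by simp
  ultimately show "w * sin \<zeta> - r - r * cos \<zeta> < 0" by linarith
  have "t\<^sup>2 > 0"
  proof -
    have "- 2 * w * r * sin \<zeta> > 0" using sz w r by (simp add: mult_pos_neg mult_neg_pos)
    moreover have "(2 * r) * (2 * r) < w * w" using w r by (intro mult_strict_mono) auto
    moreover have "2 * r\<^sup>2 * (1 - cos \<zeta>) \<le> 2 * r\<^sup>2 * 2" using bounds by (intro mult_left_mono) auto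
    ultimately show ?thesis unfolding tt by (simp add: power2_eq_square algebra_simps)
  qed
  then show "t > 0" using t by (cases "t = 0") auto
  show "t\<^sup>2 = (w * sin \<zeta> - r - r * cos \<zeta>)\<^sup>2 + (w * cos \<zeta> + r * sin \<zeta>)\<^sup>2 - (2 * r)\<^sup>2"
    using tt sin_cos_squared_add[of \<zeta>] by algebra
  show "w * sin \<zeta> - r - r * cos \<zeta> < - (2 * r)" if "w * cos \<zeta> + r * sin \<zeta> > 0"
  proof -
    have "cos \<zeta> > 0"
    proof (rule ccontr)
      assume "\<not> cos \<zeta> > 0"
      hence "w * cos \<zeta> \<le> 0" using w r by (simp add: mult_nonneg_nonpos)
      moreover have "r * sin \<zeta> < 0" using sz r by (simp add: mult_pos_neg)
      ultimately show False using that by linarith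
    qed
    hence "(cos \<zeta>)\<^sup>2 \<le> cos \<zeta>" using bounds by (simp add: power2_eq_square mult_left_le)
    hence "1 - cos \<zeta> \<le> (sin \<zeta>)\<^sup>2" using sin_cos_squared_add[of \<zeta>] by linarith
    also have "(sin \<zeta>)\<^sup>2 \<le> - sin \<zeta>"
      using sz sin_ge_minus_one[of \<zeta>] mult_right_mono[of "- sin \<zeta>" 1 "- sin \<zeta>"]
      by (simp add: power2_eq_square)
    finally have "r * (1 - cos \<zeta>) \<le> r * (- sin \<zeta>)" using r by (intro mult_left_mono) auto
    moreover have "r * (- sin \<zeta>) < w * (- sin \<zeta>)" using sz w r by simp
    ultimately show ?thesis by (simp add: algebra_simps)
  qed
qed (use r in simp)

lemma opposite_turn_identities:
  fixes r w t \<alpha> \<zeta> :: real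
  assumes e1: "t * sin \<alpha> - 2 * r * cos \<alpha> = w * sin \<zeta> - r - r * cos \<zeta>"
    and e2: "t * cos \<alpha> + 2 * r * sin \<alpha> = w * cos \<zeta> + r * sin \<zeta>"
  shows "t\<^sup>2 = w\<^sup>2 - 2 * w * r * sin \<zeta> - 2 * r\<^sup>2 * (1 - cos \<zeta>)"
    and "sin (\<alpha> - \<zeta>) * (t\<^sup>2 + 4 * r\<^sup>2) = 2 * r * (w - r * sin \<zeta>) - t * r * (1 + cos \<zeta>)"
    and "sin \<alpha> * (t\<^sup>2 + 4 * r\<^sup>2)
      = t * (w * sin \<zeta> - r - r * cos \<zeta>) + 2 * r * (w * cos \<zeta> + r * sin \<zeta>)"
proof -
  have square_sums:
      "(t * x - 2 * r * y)\<^sup>2 + (t * y + 2 * r * x)\<^sup>2 = (t\<^sup>2 + 4 * r\<^sup>2) * (x\<^sup>2 + y\<^sup>2)"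
      "(w * x - r - r * y)\<^sup>2 + (w * y + r * x)\<^sup>2 = (w\<^sup>2 + r\<^sup>2) * (x\<^sup>2 + y\<^sup>2) - 2 * w * r * x + r\<^sup>2 * (1 + 2 * y)"
    for x y :: real
    by (simp_all add: power2_eq_square algebra_simps)
  have "t\<^sup>2 + 4 * r\<^sup>2 = (t * sin \<alpha> - 2 * r * cos \<alpha>)\<^sup>2 + (t * cos \<alpha> + 2 * r * sin \<alpha>)\<^sup>2"
    using square_sums(1)[of "sin \<alpha>" "cos \<alpha>"] by simp
  also have "\<dots> = (w * sin \<zeta> - r - r * cos \<zeta>)\<^sup>2 + (w * cos \<zeta> + r * sin \<zeta>)\<^sup>2"
    unfolding e1 e2 ..
  also have "\<dots> = w\<^sup>2 + r\<^sup>2 - 2 * w * r * sin \<zeta> + r\<^sup>2 * (1 + 2 * cos \<zeta>)"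
    using square_sums(2)[of "sin \<zeta>" "cos \<zeta>"] by simp
  finally show "t\<^sup>2 = w\<^sup>2 - 2 * w * r * sin \<zeta> - 2 * r\<^sup>2 * (1 - cos \<zeta>)"
    by (simp add: algebra_simps)
  have "sin (\<alpha> - \<zeta>) * (t\<^sup>2 + 4 * r\<^sup>2)
      = t * ((t * sin \<alpha> - 2 * r * cos \<alpha>) * cos \<zeta> - (t * cos \<alpha> + 2 * r * sin \<alpha>) * sin \<zeta>)
        + 2 * r * ((t * sin \<alpha> - 2 * r * cos \<alpha>) * sin \<zeta> + (t * cos \<alpha> + 2 * r * sin \<alpha>) * cos \<zeta>)"
    unfolding sin_diff by (simp add: algebra_simps power2_eq_square)
  also have "\<dots> = 2 * r * (w * ((sin \<zeta>)\<^sup>2 + (cos \<zeta>)\<^sup>2) - r * sin \<zeta>)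
      - t * r * (cos \<zeta> + ((sin \<zeta>)\<^sup>2 + (cos \<zeta>)\<^sup>2))"
    unfolding e1 e2 by (simp only: power2_eq_square algebra_simps)
  finally show "sin (\<alpha> - \<zeta>) * (t\<^sup>2 + 4 * r\<^sup>2) = 2 * r * (w - r * sin \<zeta>) - t * r * (1 + cos \<zeta>)"
    by (simp add: algebra_simps)
  show "sin \<alpha> * (t\<^sup>2 + 4 * r\<^sup>2)
      = t * (w * sin \<zeta> - r - r * cos \<zeta>) + 2 * r * (w * cos \<zeta> + r * sin \<zeta>)"
    unfolding e1[symmetric] e2[symmetric] by (simp add: algebra_simps power2_eq_square)
qed

lemma CSC_turn_constraints_opposite_turn:
  fixes r w t \<alpha> \<zeta> :: real
  assumes r: "r > 0" and w: "w > 2 * r" and t: "t \<ge> 0"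
    and e1: "t * sin \<alpha> - 2 * r * cos \<alpha> = w * sin \<zeta> - r - r * cos \<zeta>"
    and e2: "t * cos \<alpha> + 2 * r * sin \<alpha> = w * cos \<zeta> + r * sin \<zeta>"
  shows "sin (\<alpha> - \<zeta>) \<ge> 0" and "cos \<zeta> = -1 \<Longrightarrow> sin (\<alpha> - \<zeta>) > 0"
    and "sin \<zeta> < 0 \<Longrightarrow> sin \<alpha> < 0" and "cos \<zeta> = 1 \<Longrightarrow> sin \<alpha> = 0 \<and> cos \<alpha> = 1 \<and> t = w"
proof -
  note tt = opposite_turn_identities(1)[OF e1 e2]
    and sin_diff_eq = opposite_turn_identities(2)[OF e1 e2]
    and sin_eq = opposite_turn_identities(3)[OF e1 e2]
  have D: "t\<^sup>2 + 4 * r\<^sup>2 > 0" using r by (simp add: add_nonneg_pos)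
  have wr: "w - r * sin \<zeta> > 0"
    using r w mult_left_le[OF sin_le_one[of \<zeta>] less_imp_le[OF r]] by linarith
  have "(w - r * sin \<zeta>)\<^sup>2 - t\<^sup>2 = r\<^sup>2 * (sin \<zeta>)\<^sup>2 + 2 * r\<^sup>2 * (1 - cos \<zeta>)"
    unfolding tt by (simp add: power2_eq_square algebra_simps)
  moreover have "r\<^sup>2 * (sin \<zeta>)\<^sup>2 + 2 * r\<^sup>2 * (1 - cos \<zeta>) \<ge> 0" using cos_le_one[of \<zeta>] by simp
  ultimately have "t\<^sup>2 \<le> (w - r * sin \<zeta>)\<^sup>2" by linarith
  hence "t \<le> w - r * sin \<zeta>" by (rule power2_le_imp_le) (use wr in simp)
  hence "t * (1 + cos \<zeta>) \<le> 2 * (w - r * sin \<zeta>)"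
    using mult_left_mono[of "1 + cos \<zeta>" 2 t] t cos_le_one[of \<zeta>] by simp
  hence "r * (t * (1 + cos \<zeta>)) \<le> r * (2 * (w - r * sin \<zeta>))" using r by (intro mult_left_mono) auto
  hence "sin (\<alpha> - \<zeta>) * (t\<^sup>2 + 4 * r\<^sup>2) \<ge> 0" unfolding sin_diff_eq by (simp add: algebra_simps)
  then show "sin (\<alpha> - \<zeta>) \<ge> 0" using D by (simp add: zero_le_mult_iff)
  show "sin (\<alpha> - \<zeta>) > 0" if "cos \<zeta> = -1"
  proof -
    have "sin (\<alpha> - \<zeta>) * (t\<^sup>2 + 4 * r\<^sup>2) > 0" unfolding sin_diff_eq using that wr r by simp
    then show ?thesis using D by (simp add: zero_less_mult_iff)
  qed
  show "sin \<alpha> < 0" if "sin \<zeta> < 0"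
  proof -
    have "sin \<alpha> * (t\<^sup>2 + 4 * r\<^sup>2) < 0"
      unfolding sin_eq using opposite_turn_sin_numerator_neg[OF r w t that tt] .
    then show ?thesis using D by (simp add: mult_less_0_iff)
  qed
  show "sin \<alpha> = 0 \<and> cos \<alpha> = 1 \<and> t = w" if "cos \<zeta> = 1"
  proof -
    have "sin \<zeta> = 0" using that sin_cos_squared_add[of \<zeta>] by simp
    hence "t = w" using tt that t w r by (simp add: power2_eq_iff_nonneg)
    hence "sin \<alpha> * (t\<^sup>2 + 4 * r\<^sup>2) = 0" using sin_eq \<open>sin \<zeta> = 0\<close> that by simp
    hence "sin \<alpha> = 0" using D by simp
    moreover have "cos \<alpha> = 1" using e2 \<open>sin \<alpha> = 0\<close> \<open>sin \<zeta> = 0\<close> \<open>t = w\<close> that w r by simp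
    ultimately show ?thesis using \<open>t = w\<close> by simp
  qed
qed

text \<open>Both sides of ex and ey are the position of the same point relative to the centre of
  the circle C1 (turning direction s1): reached by a straight segment of length w with heading
  \<theta>, or by a segment of length t with heading \<phi> followed by an arc of C3 (direction s3) through
  the angle \<alpha>, ending with heading h. \<zeta> is the turn from \<theta> to h in the direction of C3.\<close>

lemma CSC_into_point_turn_constraints:
  fixes r w t s1 s3 \<theta> \<phi> h \<alpha> \<zeta> :: real
  assumes r: "r > 0" and w: "w > 2 * r" and t: "t \<ge> 0"
    and s1: "s1 = 1 \<or> s1 = -1" and s3: "s3 = 1 \<or> s3 = -1"
    and \<theta>: "\<theta> = h - s3 * \<zeta>" and \<phi>: "\<phi> = h - s3 * \<alpha>"
    and ex: "s1 * r * sin \<theta> + w * cos \<theta> = s1 * r * sin \<phi> + t * cos \<phi> + s3 * r * (sin h - sin \<phi>)"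
    and ey: "- s1 * r * cos \<theta> + w * sin \<theta> = - s1 * r * cos \<phi> + t * sin \<phi> - s3 * r * (cos h - cos \<phi>)"
  shows "sin (\<alpha> - \<zeta>) \<ge> 0" and "cos \<zeta> = -1 \<Longrightarrow> sin (\<alpha> - \<zeta>) > 0"
    and "sin \<zeta> < 0 \<Longrightarrow> sin \<alpha> < 0" and "cos \<zeta> = 1 \<Longrightarrow> sin \<alpha> = 0 \<and> cos \<alpha> = 1 \<and> t = w"
proof -
  have sin_s3: "sin (s3 * x) = s3 * sin x" and cos_s3: "cos (s3 * x) = cos x" for x
    using s3 by auto
  have "sin \<theta> = sin h * cos \<zeta> - s3 * cos h * sin \<zeta>" "cos \<theta> = cos h * cos \<zeta> + s3 * sin h * sin \<zeta>"
    "sin \<phi> = sin h * cos \<alpha> - s3 * cos h * sin \<alpha>" "cos \<phi> = cos h * cos \<alpha> + s3 * sin h * sin \<alpha>"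
    unfolding \<theta> \<phi> sin_diff cos_diff sin_s3 cos_s3 by simp_all
  moreover have "s3 * s3 = 1" using s3 by auto
  moreover have "sin h * sin h + cos h * cos h = 1" using sin_cos_squared_add[of h] by (simp add: power2_eq_square)
  ultimately have e1: "t * sin \<alpha> - (1 - s1 * s3) * r * cos \<alpha> = w * sin \<zeta> - r + s1 * s3 * r * cos \<zeta>"
    and e2: "t * cos \<alpha> + (1 - s1 * s3) * r * sin \<alpha> = w * cos \<zeta> - s1 * s3 * r * sin \<zeta>"
    using ex ey by algebra+
  have p: "s1 * s3 = 1 \<or> s1 * s3 = -1" using s1 s3 by auto
  note same = CSC_turn_constraints_same_turn[OF r w t, of \<alpha> \<zeta>]
  note opposite = CSC_turn_constraints_opposite_turn[OF r w t, of \<alpha> \<zeta>]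
  show "sin (\<alpha> - \<zeta>) \<ge> 0" using p e1 e2 same opposite by auto
  show "cos \<zeta> = -1 \<Longrightarrow> sin (\<alpha> - \<zeta>) > 0" using p e1 e2 same opposite by auto
  show "sin \<zeta> < 0 \<Longrightarrow> sin \<alpha> < 0" using p e1 e2 same opposite by auto
  show "cos \<zeta> = 1 \<Longrightarrow> sin \<alpha> = 0 \<and> cos \<alpha> = 1 \<and> t = w" using p e1 e2 same opposite by auto
qed

text \<open>The mirror situation after the point: ex and ey are the position of the centre of C5
  relative to the point. Traversed backwards, this is the situation before the point, with the
  direction of C3 and the heading \<zeta> reversed and C5 in the role of C1.\<close>

lemma CSC_out_of_point_turn_constraints:
  fixes r w t s3 s5 \<theta> \<phi> h \<beta> \<zeta> :: real
  assumes r: "r > 0" and w: "w > 2 * r" and t: "t \<ge> 0"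
    and s3: "s3 = 1 \<or> s3 = -1" and s5: "s5 = 1 \<or> s5 = -1"
    and \<theta>: "\<theta> = h - s3 * \<zeta>" and \<phi>: "\<phi> = h + s3 * \<beta>"
    and ex: "w * cos \<theta> - s5 * r * sin \<theta> = s3 * r * (sin \<phi> - sin h) + t * cos \<phi> - s5 * r * sin \<phi>"
    and ey: "w * sin \<theta> + s5 * r * cos \<theta> = - s3 * r * (cos \<phi> - cos h) + t * sin \<phi> + s5 * r * cos \<phi>"
  shows "sin (\<beta> + \<zeta>) \<ge> 0" and "cos \<zeta> = -1 \<Longrightarrow> sin (\<beta> + \<zeta>) > 0"
    and "sin \<zeta> > 0 \<Longrightarrow> sin \<beta> < 0" and "cos \<zeta> = 1 \<Longrightarrow> sin \<beta> = 0 \<and> cos \<beta> = 1 \<and> t = w"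
proof -
  have signs: "- s5 = 1 \<or> - s5 = -1" "- s3 = 1 \<or> - s3 = -1" using s3 s5 by auto
  have headings: "\<theta> + pi = (h + pi) - (- s3) * (- \<zeta>)" "\<phi> + pi = (h + pi) - (- s3) * \<beta>"
    using \<theta> \<phi> by simp_all
  have equations:
    "- s5 * r * sin (\<theta> + pi) + w * cos (\<theta> + pi)
       = - s5 * r * sin (\<phi> + pi) + t * cos (\<phi> + pi) + - s3 * r * (sin (h + pi) - sin (\<phi> + pi))"
    "- (- s5) * r * cos (\<theta> + pi) + w * sin (\<theta> + pi)
       = - (- s5) * r * cos (\<phi> + pi) + t * sin (\<phi> + pi) - (- s3) * r * (cos (h + pi) - cos (\<phi> + pi))"
    using ex ey by (simp_all add: algebra_simps)
  note reversed = CSC_into_point_turn_constraints[OF r w t signs headings equations]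
  show "sin (\<beta> + \<zeta>) \<ge> 0" and "cos \<zeta> = -1 \<Longrightarrow> sin (\<beta> + \<zeta>) > 0"
    and "sin \<zeta> > 0 \<Longrightarrow> sin \<beta> < 0" and "cos \<zeta> = 1 \<Longrightarrow> sin \<beta> = 0 \<and> cos \<beta> = 1 \<and> t = w"
    using reversed by simp_all
qed

lemma turn_angle_zero:
  fixes \<alpha> \<beta> \<eta> :: real
  assumes \<alpha>: "0 \<le> \<alpha>" and \<beta>: "0 \<le> \<beta>" and \<alpha>\<beta>: "\<alpha> + \<beta> < 2 * pi" and \<eta>: "0 \<le> \<eta>" "\<eta> < 2 * pi"
    and sin_\<alpha>\<eta>: "sin (\<alpha> - \<eta>) \<ge> 0" and sin_\<beta>\<eta>: "sin (\<beta> + \<eta>) \<ge> 0"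
    and sin_\<alpha>: "sin \<eta> < 0 \<Longrightarrow> sin \<alpha> < 0" and sin_\<beta>: "sin \<eta> > 0 \<Longrightarrow> sin \<beta> < 0"
    and half_turn: "cos \<eta> = -1 \<Longrightarrow> sin (\<alpha> - \<eta>) > 0 \<and> sin (\<beta> + \<eta>) > 0"
  shows "\<eta> = 0"
proof (rule ccontr)
  assume "\<eta> \<noteq> 0"
  have \<alpha>_ge: "\<alpha> \<ge> \<eta>" if "\<alpha> - \<eta> > -pi"
  proof (rule ccontr)
    assume "\<not> \<alpha> \<ge> \<eta>"
    then have "sin (\<alpha> - \<eta>) < 0" using that sin_gt_zero[of "\<eta> - \<alpha>"] sin_minus[of "\<eta> - \<alpha>"] by simp
    then show False using sin_\<alpha>\<eta> by simp
  qed
  have \<beta>\<eta>_ge: "\<beta> + \<eta> \<ge> 2 * pi" if "\<beta> + \<eta> > pi"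
  proof (rule ccontr)
    assume "\<not> \<beta> + \<eta> \<ge> 2 * pi"
    then have "sin (\<beta> + \<eta>) < 0" using that by (intro sin_lt_zero) auto
    then show False using sin_\<beta>\<eta> by simp
  qed
  have gt_pi: "x > pi" if "0 \<le> x" "sin x < 0" for x :: real
    using that sin_ge_zero[of x] by (cases "x \<le> pi") auto
  consider "\<eta> < pi" | "\<eta> = pi" | "\<eta> > pi" by linarith
  then show False
  proof cases
    case 1
    hence "sin \<eta> > 0" using \<open>\<eta> \<noteq> 0\<close> \<eta> by (intro sin_gt_zero) auto
    hence "\<beta> > pi" using gt_pi \<beta> sin_\<beta> by blast
    hence "\<alpha> \<ge> \<eta>" "\<beta> + \<eta> \<ge> 2 * pi" using \<alpha>_ge \<beta>\<eta>_ge \<alpha>\<beta> \<alpha> \<eta> 1 by linarith+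
    then show False using \<alpha>\<beta> by linarith
  next
    case 2
    hence "sin (\<alpha> - \<eta>) > 0" "sin (\<beta> + \<eta>) > 0" using half_turn by auto
    hence "sin \<alpha> < 0" "sin \<beta> < 0" using 2 by (simp_all add: sin_diff sin_add)
    hence "\<alpha> > pi" "\<beta> > pi" using gt_pi \<alpha> \<beta> by blast+
    then show False using \<alpha>\<beta> by linarith
  next
    case 3
    hence "sin \<eta> < 0" using \<eta> by (intro sin_lt_zero) auto
    hence "\<alpha> > pi" using gt_pi \<alpha> sin_\<alpha> by blast
    hence "\<alpha> \<ge> \<eta>" "\<beta> + \<eta> \<ge> 2 * pi" using \<alpha>_ge \<beta>\<eta>_ge \<alpha>\<beta> \<beta> \<eta> 3 by linarith+
    then show False using \<alpha>\<beta> by linarith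
  qed
qed

lemma turn_angle_cos_eq_1:
  fixes \<alpha> \<beta> \<zeta> :: real
  assumes "0 \<le> \<alpha>" "0 \<le> \<beta>" "\<alpha> + \<beta> < 2 * pi"
    and "sin (\<alpha> - \<zeta>) \<ge> 0" "sin (\<beta> + \<zeta>) \<ge> 0"
    and "sin \<zeta> < 0 \<Longrightarrow> sin \<alpha> < 0" "sin \<zeta> > 0 \<Longrightarrow> sin \<beta> < 0"
    and "cos \<zeta> = -1 \<Longrightarrow> sin (\<alpha> - \<zeta>) > 0 \<and> sin (\<beta> + \<zeta>) > 0"
  shows "cos \<zeta> = 1"
proof -
  obtain \<eta> where \<eta>: "0 \<le> \<eta>" "\<eta> < 2 * pi" and "cos \<zeta> = cos \<eta>" "sin \<zeta> = sin \<eta>"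
    using sincos_total_2pi[of "cos \<zeta>" "sin \<zeta>"] by auto
  with assms have "\<eta> = 0"
    by (intro turn_angle_zero[OF assms(1-3) \<eta>]) (simp_all add: sin_diff sin_add)
  then show ?thesis using \<open>cos \<zeta> = cos \<eta>\<close> by simp
qed

lemma arc_length_unique_mod_full_turn:
  fixes x y r c :: real and k :: int
  assumes r: "r > 0" and c: "c = 1 \<or> c = -1"
    and x: "0 \<le> x" "x < 2 * pi * r" and y: "0 \<le> y" "y < 2 * pi * r"
    and headings: "c * x / r = c * y / r + 2 * pi * k"
  shows "x = y"
proof -
  have "x - y = c * r * (2 * pi * k)" using headings c r by (auto simp: field_simps)
  then have "\<bar>c * r * (2 * pi * k)\<bar> < 2 * pi * r" using x y by auto
  hence "r * (2 * pi * \<bar>real_of_int k\<bar>) < r * (2 * pi)" using c r by (auto simp: abs_mult algebra_simps)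
  hence "\<bar>real_of_int k\<bar> < 1" using r pi_gt_zero by (simp add: mult_less_cancel_left)
  hence "k = 0" by linarith
  then show ?thesis using headings c r by auto
qed

lemma eq_0_if_cos_eq_1:
  fixes x :: real
  assumes "cos x = 1" "0 \<le> x" "x < 2 * pi"
  shows "x = 0"
proof -
  obtain k :: int where "x = k * 2 * pi" using assms(1) cos_one_2pi_int by auto
  then show ?thesis using arc_length_unique_mod_full_turn[of 1 1 x 0 k] assms(2,3) by simp
qed

lemma CSCSC_path_C3_trivial_equations:
  assumes "CSCSC_path r d1 d3 d5 Xi xm Xf l1 s2 0 0 s4 l5"
  defines "\<theta> \<equiv> snd Xi + tsign d1 * l1 / r"
  shows "fst xm = fst (fst Xi) + tsign d1 * r * (sin \<theta> - sin (snd Xi)) + s2 * cos \<theta>"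
    and "snd xm = snd (fst Xi) - tsign d1 * r * (cos \<theta> - cos (snd Xi)) + s2 * sin \<theta>"
    and "fst (fst Xf) = fst xm + s4 * cos \<theta> + tsign d5 * r * (sin (snd Xf) - sin \<theta>)"
    and "snd (fst Xf) = snd xm + s4 * sin \<theta> - tsign d5 * r * (cos (snd Xf) - cos \<theta>)"
  using CSCSC_path_equations(1-4)[OF assms(1)] by (simp_all add: \<theta>_def)

lemma CSCSC_path_C3_trivial_straights_gt:
  assumes r: "r > 0" and far_i: "dist (fst Xi) xm \<ge> 4 * r" and far_f: "dist xm (fst Xf) \<ge> 4 * r"
    and path: "CSCSC_path r d1 d3 d5 Xi xm Xf l1 s2 0 0 s4 l5"
  shows "s2 > 2 * r" and "s4 > 2 * r"
proof -
  note eqs = CSCSC_path_C3_trivial_equations[OF path] and lengths = CSCSC_path_lengths[OF path]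
  show "s2 > 2 * r"
    using arc_straight_length_gt[OF r lengths(3) tsign_cases far_i eqs(1,2)] .
  show "s4 > 2 * r"
  proof (rule arc_straight_length_gt[OF r lengths(7) _ far_f])
    show "- tsign d5 = 1 \<or> - tsign d5 = -1" using tsign_cases[of d5] by auto
  qed (use eqs(3,4) in \<open>simp_all add: algebra_simps\<close>)
qed

lemma CSCSC_path_last_arc_unique:
  assumes r: "r > 0"
    and "CSCSC_path r d1 d3 d5 Xi xm Xf l1 s2 l3a l3b s4 l5"
    and "CSCSC_path r d1 d3 d5 Xi xm Xf l1 s2 l3a l3b s4 m5"
  shows "m5 = l5"
proof -
  obtain k1 k2 :: int where
    "snd Xi + tsign d1 * l1 / r + tsign d3 * l3a / r + tsign d3 * l3b / r + tsign d5 * l5 / r = snd Xf + 2 * pi * k1"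
    "snd Xi + tsign d1 * l1 / r + tsign d3 * l3a / r + tsign d3 * l3b / r + tsign d5 * m5 / r = snd Xf + 2 * pi * k2"
    using CSCSC_path_equations(5)[OF assms(2)] CSCSC_path_equations(5)[OF assms(3)] by blast
  then have "tsign d5 * m5 / r = tsign d5 * l5 / r + 2 * pi * (k2 - k1)" by (simp add: algebra_simps)
  then show ?thesis
    using arc_length_unique_mod_full_turn[OF r tsign_cases]
      CSCSC_path_lengths(8,9)[OF assms(2)] CSCSC_path_lengths(8,9)[OF assms(3)] by blast
qed

lemma CSCSC_path_unique_if_C3_trivial:
  assumes r: "r > 0" and far_i: "dist (fst Xi) xm \<ge> 4 * r" and far_f: "dist xm (fst Xf) \<ge> 4 * r"
    and given: "CSCSC_path r d1 d3 d5 Xi xm Xf l1 s2 0 0 s4 l5"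
    and other: "CSCSC_path r d1 d3 d5 Xi xm Xf m1 t2 m3a m3b t4 m5"
  shows "m1 = l1 \<and> t2 = s2 \<and> m3a = 0 \<and> m3b = 0 \<and> t4 = s4 \<and> m5 = l5"
proof -
  define s1 s3 s5 where "s1 = tsign d1" and "s3 = tsign d3" and "s5 = tsign d5"
  have signs: "s1 = 1 \<or> s1 = -1" "s3 = 1 \<or> s3 = -1" "s5 = 1 \<or> s5 = -1"
    unfolding s1_def s3_def s5_def by (rule tsign_cases)+
  define \<theta> where "\<theta> = snd Xi + s1 * l1 / r"
  define \<phi>2 where "\<phi>2 = snd Xi + s1 * m1 / r"
  define h where "h = \<phi>2 + s3 * m3a / r"
  define \<phi>4 where "\<phi>4 = h + s3 * m3b / r"
  define \<alpha> \<beta> \<zeta> where "\<alpha> = m3a / r" and "\<beta> = m3b / r" and "\<zeta> = s3 * (h - \<theta>)"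
  note G = CSCSC_path_C3_trivial_equations[OF given, folded s1_def s5_def, folded \<theta>_def]
  note A = CSCSC_path_equations(1-4)[OF other, folded s1_def s3_def s5_def,
      folded \<phi>2_def, folded h_def, folded \<phi>4_def]
  note gl = CSCSC_path_lengths[OF given] and ml = CSCSC_path_lengths[OF other]
  note straights = CSCSC_path_C3_trivial_straights_gt[OF r far_i far_f given]
  have \<theta>_eq: "\<theta> = h - s3 * \<zeta>" and \<phi>2_eq: "\<phi>2 = h - s3 * \<alpha>" and \<phi>4_eq: "\<phi>4 = h + s3 * \<beta>"
    using signs(2) unfolding \<zeta>_def \<alpha>_def \<beta>_def h_def \<phi>4_def by (auto simp: algebra_simps)
  have "s1 * r * sin \<theta> + s2 * cos \<theta> = s1 * r * sin \<phi>2 + t2 * cos \<phi>2 + s3 * r * (sin h - sin \<phi>2)"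
    "- s1 * r * cos \<theta> + s2 * sin \<theta> = - s1 * r * cos \<phi>2 + t2 * sin \<phi>2 - s3 * r * (cos h - cos \<phi>2)"
    using G(1,2) A(1,2) by (simp_all add: algebra_simps)
  note before = CSC_into_point_turn_constraints[OF r straights(1) ml(3) signs(1,2) \<theta>_eq \<phi>2_eq this]
  have "s4 * cos \<theta> - s5 * r * sin \<theta> = s3 * r * (sin \<phi>4 - sin h) + t4 * cos \<phi>4 - s5 * r * sin \<phi>4"
    "s4 * sin \<theta> + s5 * r * cos \<theta> = - s3 * r * (cos \<phi>4 - cos h) + t4 * sin \<phi>4 + s5 * r * cos \<phi>4"
    using G(3,4) A(3,4) by (simp_all add: algebra_simps)
  note after = CSC_out_of_point_turn_constraints[OF r straights(2) ml(7) signs(2,3) \<theta>_eq \<phi>4_eq this]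
  have "\<alpha> + \<beta> = (m3a + m3b) / r" unfolding \<alpha>_def \<beta>_def by (simp add: add_divide_distrib)
  then have angles: "0 \<le> \<alpha>" "0 \<le> \<beta>" "\<alpha> + \<beta> < 2 * pi"
    using ml(4-6) r unfolding \<alpha>_def \<beta>_def by (simp_all add: pos_divide_less_eq)
  have "cos \<zeta> = 1"
    by (rule turn_angle_cos_eq_1[OF angles]) (use before after in auto)
  then have "\<alpha> = 0" "\<beta> = 0" and t2: "t2 = s2" and t4: "t4 = s4"
    using before(4) after(4) angles eq_0_if_cos_eq_1 by auto
  then have m3: "m3a = 0" "m3b = 0" using r unfolding \<alpha>_def \<beta>_def by simp_all
  have "cos (h - \<theta>) = 1" using \<open>cos \<zeta> = 1\<close> \<theta>_eq signs(2) by auto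
  then obtain j :: int where "h - \<theta> = j * 2 * pi" using cos_one_2pi_int by auto
  then have "s1 * m1 / r = s1 * l1 / r + 2 * pi * j"
    using m3 unfolding h_def \<phi>2_def \<theta>_def by (simp add: algebra_simps)
  then have m1: "m1 = l1" using arc_length_unique_mod_full_turn[OF r signs(1) ml(1,2) gl(1,2)] by blast
  have "m5 = l5" using CSCSC_path_last_arc_unique[OF r given] other m1 t2 m3 t4 by simp
  then show ?thesis using m1 t2 m3 t4 by simp
qed

theorem lemma3:
  fixes r :: real and Xi Xf :: config and xm :: point and d1 d3 d5 :: turn
    and l1 s2 l3a l3b s4 l5 :: real
  assumes "dubins3_instance r Xi xm Xf"
    and "CSCSC_path r d1 d3 d5 Xi xm Xf l1 s2 l3a l3b s4 l5"
    and "S2_S4_collinear r d1 d3 Xi l1 s2 l3a l3b"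
  shows "\<forall>m1 t2 m3a m3b t4 m5.
           CSCSC_path r d1 d3 d5 Xi xm Xf m1 t2 m3a m3b t4 m5 \<longrightarrow>
           CSCSC_length l1 s2 l3a l3b s4 l5 \<le> CSCSC_length m1 t2 m3a m3b t4 m5"
proof (intro allI impI)
  fix m1 t2 m3a m3b t4 m5
  assume other: "CSCSC_path r d1 d3 d5 Xi xm Xf m1 t2 m3a m3b t4 m5"
  have r: "r > 0" and far: "dist (fst Xi) xm \<ge> 4 * r" "dist xm (fst Xf) \<ge> 4 * r"
    using assms(1) unfolding dubins3_instance_def by auto
  have C3: "l3a = 0 \<and> l3b = 0"
    using S2_S4_collinear_imp_C3_trivial[OF r CSCSC_path_lengths(4-6)[OF assms(2)] assms(3)] .
  then have "CSCSC_path r d1 d3 d5 Xi xm Xf l1 s2 0 0 s4 l5" using assms(2) by simp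
  from CSCSC_path_unique_if_C3_trivial[OF r far this other]
  show "CSCSC_length l1 s2 l3a l3b s4 l5 \<le> CSCSC_length m1 t2 m3a m3b t4 m5"
    using C3 by (simp add: CSCSC_length_def)
qed

end
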